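(* Let $\mathcal{L}$ be a triangulation of a closed 3-manifold $\mathcal{M}^3$ with a branching structure, and consider three copies $i=1,2,3$ of the $\mathbb{Z}_2$ toric code on $\mathcal{L}$ as described in the context. Define the constant-depth circuit $$U=\prod_{[v_0v_1v_2v_3]\in\mathcal{L}}\mathrm{CCZ}\big(q^{(1)}_{[v_0v_1]},\,q^{(2)}_{[v_1v_2]},\,q^{(3)}_{[v_2v_3]}\big)=(-1)^{\int_{\mathcal{L}}a^{(1)}\cup a^{(2)}\cup a^{(3)}},$$ the product over all 3-simplices with $v_0\prec v_1\prec v_2\prec v_3$. Then $U$ preserves the code space, and on the code space $$U=\prod_{\alpha^1,\beta^1,\gamma^1\in B^1}\overline{\mathrm{CCZ}}\big[(\alpha^1;1),(\beta^1;2),(\gamma^1;3)\big]^{\int_{\mathcal{M}^3}\alpha^1\cup\beta^1\cup\gamma^1},$$ i.e. a logical CCZ acts on $(\alpha^1;1),(\beta^1;2),(\gamma^1;3)$ exactly when the Poincaré-dual 2-cycles have $\mathbb{Z}_2$ triple intersection number $1$.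
   Context: Branching structure: an ordering $v_0\prec v_1\prec\cdots$ of the vertices of each simplex, consistent on shared faces. Toric code copy $i$: one qubit $q^{(i)}_e$ per edge $e$; $X$-stabilizers $\prod_{e\ni v}X^{(i)}_e$ for each vertex $v$; $Z$-stabilizers $\prod_{e\subset f}Z^{(i)}_e$ for each triangle $f$. The operator-valued 1-cochain $a^{(i)}$ with values in $\{0,1\}$ is defined by $(-1)^{a^{(i)}(e)}=Z^{(i)}_e$; the cup product of cochains on an ordered simplex is $(\alpha^p\cup\beta^q)([v_0\cdots v_{p+q}])=\alpha^p([v_0\cdots v_p])\beta^q([v_p\cdots v_{p+q}])$, and $\int_{\mathcal{L}}$ is the sum over all 3-simplices mod 2. On the code space $da^{(i)}=0$, and the class of $a^{(i)}$ in $H^1(\mathcal{M}^3;\mathbb{Z}_2)$ is measured by logical $Z$ operators. Fix a basis $B^1$ of $H^1(\mathcal{M}^3;\mathbb{Z}_2)$; writing $[a^{(1)}]=\sum_\alpha n_\alpha\alpha^1$, $[a^{(2)}]=\sum_\beta m_\beta\beta^1$, $[a^{(3)}]=\sum_\gamma l_\gamma\gamma^1$ with $n_\alpha,m_\beta,l_\gamma\in\{0,1\}$, the logical qubit $(\alpha^1;1)$ has logical computational basis value $n_\alpha$ (similarly for $(\beta^1;2),(\gamma^1;3)$), and $\overline{\mathrm{CCZ}}[(\alpha^1;1),(\beta^1;2),(\gamma^1;3)]$ acts as $(-1)^{n_\alpha m_\beta l_\gamma}$. *)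

theory Defs
  imports Complex_Main "HOL-Library.Z2"
begin

text \<open>A triangulation is given by its (finite) set T of 3-simplices, each a 4-element
vertex set; the complex consists of all faces of these tetrahedra.\<close>

definition cedges :: "'v set set \<Rightarrow> 'v set set" where
  "cedges T = {e. \<exists>t\<in>T. e \<subseteq> t \<and> card e = 2}"

definition ctris :: "'v set set \<Rightarrow> 'v set set" where
  "ctris T = {f. \<exists>t\<in>T. f \<subseteq> t \<and> card f = 3}"

definition bdry_edges :: "'v set \<Rightarrow> 'v set set" where
  "bdry_edges f = {e. e \<subseteq> f \<and> card e = 2}"

definition graph_connected :: "'v set \<Rightarrow> 'v set set \<Rightarrow> bool" where
  "graph_connected V Es = (\<forall>x\<in>V. \<forall>y\<in>V. (\<lambda>u w. {u, w} \<in> Es)\<^sup>*\<^sup>* x y)"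

definition sedges :: "'v set set \<Rightarrow> 'v set set" where
  "sedges S = {e. \<exists>s\<in>S. e \<subseteq> s \<and> card e = 2}"

definition vlink2 :: "'v set set \<Rightarrow> 'v \<Rightarrow> 'v set set" where
  "vlink2 S w = {s - {w} | s. s \<in> S \<and> w \<in> s}"

text \<open>A triangulated 2-sphere: a closed connected combinatorial surface (every edge in exactly
two triangles, every vertex link a single cycle) of Euler characteristic 2.\<close>
definition is_2sphere :: "'v set set \<Rightarrow> bool" where
  "is_2sphere S \<longleftrightarrow> finite S \<and> S \<noteq> {} \<and> (\<forall>s\<in>S. card s = 3)
     \<and> (\<forall>e\<in>sedges S. card {s\<in>S. e \<subseteq> s} = 2)
     \<and> (\<forall>w\<in>\<Union>S. graph_connected (\<Union>(vlink2 S w)) (vlink2 S w))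
     \<and> graph_connected (\<Union>S) (sedges S)
     \<and> int (card (\<Union>S)) - int (card (sedges S)) + int (card S) = 2"

definition vlink3 :: "'v set set \<Rightarrow> 'v \<Rightarrow> 'v set set" where
  "vlink3 T v = {t - {v} | t. t \<in> T \<and> v \<in> t}"

text \<open>Triangulation of a closed 3-manifold (combinatorial characterisation: every vertex link
is a triangulated 2-sphere).\<close>
definition closed_3mfd_triangulation :: "'v set set \<Rightarrow> bool" where
  "closed_3mfd_triangulation T \<longleftrightarrow> finite T \<and> T \<noteq> {} \<and> (\<forall>t\<in>T. card t = 4)
     \<and> (\<forall>v\<in>\<Union>T. is_2sphere (vlink3 T v))"

text \<open>Branching structure: a relation that orders the vertices of every simplex totally;
being a single relation on vertex pairs, it is automatically consistent on shared faces.\<close>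
definition branching :: "'v set set \<Rightarrow> ('v \<Rightarrow> 'v \<Rightarrow> bool) \<Rightarrow> bool" where
  "branching T prec \<longleftrightarrow> (\<forall>u w. prec u w \<longrightarrow> \<not> prec w u)
     \<and> (\<forall>t\<in>T. \<forall>u\<in>t. \<forall>w\<in>t. u \<noteq> w \<longrightarrow> prec u w \<or> prec w u)
     \<and> (\<forall>t\<in>T. \<forall>x\<in>t. \<forall>y\<in>t. \<forall>z\<in>t. prec x y \<longrightarrow> prec y z \<longrightarrow> prec x z)"

definition vtx :: "('v \<Rightarrow> 'v \<Rightarrow> bool) \<Rightarrow> 'v set \<Rightarrow> nat \<Rightarrow> 'v" where
  "vtx prec t i = (THE v. v \<in> t \<and> card {w\<in>t. prec w v} = i)"

type_synonym 'v cochain1 = "'v set \<Rightarrow> bit"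

definition is_cochain1 :: "'v set set \<Rightarrow> 'v cochain1 \<Rightarrow> bool" where
  "is_cochain1 T c \<longleftrightarrow> (\<forall>e. e \<notin> cedges T \<longrightarrow> c e = 0)"

definition cocycle1 :: "'v set set \<Rightarrow> 'v cochain1 \<Rightarrow> bool" where
  "cocycle1 T c \<longleftrightarrow> is_cochain1 T c \<and> (\<forall>f\<in>ctris T. (\<Sum>e\<in>bdry_edges f. c e) = 0)"

definition cohomologous :: "'v set set \<Rightarrow> 'v cochain1 \<Rightarrow> 'v cochain1 \<Rightarrow> bool" where
  "cohomologous T c d \<longleftrightarrow> (\<exists>g :: 'v \<Rightarrow> bit. \<forall>e\<in>cedges T. c e - d e = (\<Sum>v\<in>e. g v))"

definition cup3_int :: "'v set set \<Rightarrow> ('v \<Rightarrow> 'v \<Rightarrow> bool) \<Rightarrow> 'v cochain1 \<Rightarrow> 'v cochain1 \<Rightarrow> 'v cochain1 \<Rightarrow> bit" where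
  "cup3_int T prec x y z = (\<Sum>t\<in>T. x {vtx prec t 0, vtx prec t 1} * y {vtx prec t 1, vtx prec t 2}
                                     * z {vtx prec t 2, vtx prec t 3})"

definition lincomb :: "'v cochain1 set \<Rightarrow> ('v cochain1 \<Rightarrow> bit) \<Rightarrow> 'v cochain1" where
  "lincomb B n = (\<lambda>e. \<Sum>\<alpha>\<in>B. n \<alpha> * \<alpha> e)"

text \<open>B is a set of cocycles whose classes form a basis of H^1(M;Z2): every cocycle is
cohomologous to a unique linear combination of elements of B.\<close>
definition coh_basis :: "'v set set \<Rightarrow> 'v cochain1 set \<Rightarrow> bool" where
  "coh_basis T B \<longleftrightarrow> finite B \<and> (\<forall>\<alpha>\<in>B. cocycle1 T \<alpha>)
     \<and> (\<forall>c. cocycle1 T c \<longrightarrow> (\<exists>!n. (\<forall>x. x \<notin> B \<longrightarrow> n x = 0) \<and> cohomologous T c (lincomb B n)))"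

definition coeff :: "'v set set \<Rightarrow> 'v cochain1 set \<Rightarrow> 'v cochain1 \<Rightarrow> 'v cochain1 \<Rightarrow> bit" where
  "coeff T B c \<alpha> = (THE n. (\<forall>x. x \<notin> B \<longrightarrow> n x = 0) \<and> cohomologous T c (lincomb B n)) \<alpha>"

text \<open>Computational (Z-)basis configurations: a i e is the value of qubit q^(i)_e, i.e.
Z^(i)_e = (-1)^(a i e). States are complex amplitude functions on valid configurations.\<close>
type_synonym 'v cfg = "nat \<Rightarrow> 'v cochain1"

definition valid_cfg :: "'v set set \<Rightarrow> 'v cfg \<Rightarrow> bool" where
  "valid_cfg T a \<longleftrightarrow> (\<forall>i e. i \<notin> {1,2,3} \<or> e \<notin> cedges T \<longrightarrow> a i e = 0)"

definition hilb :: "'v set set \<Rightarrow> ('v cfg \<Rightarrow> complex) set" where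
  "hilb T = {\<psi>. \<forall>a. \<not> valid_cfg T a \<longrightarrow> \<psi> a = 0}"

definition sgnb :: "bit \<Rightarrow> complex" where
  "sgnb b = (if b = 0 then 1 else -1)"

definition Xstab :: "'v set set \<Rightarrow> nat \<Rightarrow> 'v \<Rightarrow> ('v cfg \<Rightarrow> complex) \<Rightarrow> ('v cfg \<Rightarrow> complex)" where
  "Xstab T i v \<psi> = (\<lambda>a. \<psi> (a(i := (\<lambda>e. if e \<in> cedges T \<and> v \<in> e then a i e + 1 else a i e))))"

definition Zstab :: "nat \<Rightarrow> 'v set \<Rightarrow> ('v cfg \<Rightarrow> complex) \<Rightarrow> ('v cfg \<Rightarrow> complex)" where
  "Zstab i f \<psi> = (\<lambda>a. sgnb (\<Sum>e\<in>bdry_edges f. a i e) * \<psi> a)"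

definition code_space :: "'v set set \<Rightarrow> ('v cfg \<Rightarrow> complex) set" where
  "code_space T = {\<psi>\<in>hilb T. (\<forall>i\<in>{1,2,3}. \<forall>v\<in>\<Union>T. Xstab T i v \<psi> = \<psi>)
                            \<and> (\<forall>i\<in>{1,2,3}. \<forall>f\<in>ctris T. Zstab i f \<psi> = \<psi>)}"

definition CCZ_phys :: "nat \<times> 'v set \<Rightarrow> nat \<times> 'v set \<Rightarrow> nat \<times> 'v set \<Rightarrow> ('v cfg \<Rightarrow> complex) \<Rightarrow> ('v cfg \<Rightarrow> complex)" where
  "CCZ_phys q1 q2 q3 \<psi> = (\<lambda>a. sgnb (a (fst q1) (snd q1) * a (fst q2) (snd q2) * a (fst q3) (snd q3)) * \<psi> a)"

text \<open>The circuit U: product over all tetrahedra of the (commuting, diagonal) physical CCZ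
gates; written as the product of their phases.\<close>
definition U_circ :: "'v set set \<Rightarrow> ('v \<Rightarrow> 'v \<Rightarrow> bool) \<Rightarrow> ('v cfg \<Rightarrow> complex) \<Rightarrow> ('v cfg \<Rightarrow> complex)" where
  "U_circ T prec \<psi> = (\<lambda>a. (\<Prod>t\<in>T. sgnb (a 1 {vtx prec t 0, vtx prec t 1} * a 2 {vtx prec t 1, vtx prec t 2}
                                            * a 3 {vtx prec t 2, vtx prec t 3})) * \<psi> a)"

definition logical_CCZ_phase :: "'v set set \<Rightarrow> 'v cochain1 set \<Rightarrow> 'v cochain1 \<Rightarrow> 'v cochain1 \<Rightarrow> 'v cochain1 \<Rightarrow> 'v cfg \<Rightarrow> complex" where
  "logical_CCZ_phase T B \<alpha> \<beta> \<gamma> a = sgnb (coeff T B (a 1) \<alpha> * coeff T B (a 2) \<beta> * coeff T B (a 3) \<gamma>)"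

definition logical_CCZ :: "'v set set \<Rightarrow> 'v cochain1 set \<Rightarrow> 'v cochain1 \<Rightarrow> 'v cochain1 \<Rightarrow> 'v cochain1 \<Rightarrow> ('v cfg \<Rightarrow> complex) \<Rightarrow> ('v cfg \<Rightarrow> complex)" where
  "logical_CCZ T B \<alpha> \<beta> \<gamma> \<psi> = (\<lambda>a. logical_CCZ_phase T B \<alpha> \<beta> \<gamma> a * \<psi> a)"

definition bit_nat :: "bit \<Rightarrow> nat" where
  "bit_nat b = (if b = 0 then 0 else 1)"

text \<open>The product over alpha,beta,gamma in B of logical CCZ raised to the power
\<open>\<integral> alpha \<union> beta \<union> gamma\<close> (commuting diagonal operators: product of phases).\<close>
definition logical_product :: "'v set set \<Rightarrow> ('v \<Rightarrow> 'v \<Rightarrow> bool) \<Rightarrow> 'v cochain1 set \<Rightarrow> ('v cfg \<Rightarrow> complex) \<Rightarrow> ('v cfg \<Rightarrow> complex)" where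
  "logical_product T prec B \<psi> = (\<lambda>a. (\<Prod>\<alpha>\<in>B. \<Prod>\<beta>\<in>B. \<Prod>\<gamma>\<in>B.
        logical_CCZ_phase T B \<alpha> \<beta> \<gamma> a ^ bit_nat (cup3_int T prec \<alpha> \<beta> \<gamma>)) * \<psi> a)"

end

theory Submission
  imports Defs
begin

(* U is diagonal in the computational basis with phase (-1)^(\<integral> a1 \<union> a2 \<union> a3). On the support
   of a code state every a^(i) is a cocycle, and the X-stabiliser at v changes a^(i) by the
   coboundary of the indicator cochain of v. For cocycles, \<integral> x \<union> y \<union> z only depends on
   cohomology classes: replacing one argument by a cohomologous cochain changes the integrand
   on every tetrahedron by the coboundary of a 2-cochain (Leibniz rule), and coboundaries
   integrate to zero over a closed 3-manifold because every triangle is a face of exactly two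
   tetrahedra. Hence U commutes with the stabilisers, and replacing each a^(i) by its
   representative in the basis B and expanding trilinearly gives the phase of the product of
   logical CCZ gates. *)

(* Keep Z2 arithmetic as ring arithmetic: together with bit_add_self, algebra_simps then
   decides identities in characteristic 2. *)
declare add_bit_eq_xor[simp del] mult_bit_eq_and[simp del]

lemma bit_add_self [simp]: "(x::bit) + x = 0"
  by (cases x) simp_all

lemma bit_add_self_left [simp]: "(x::bit) + (x + y) = y"
  by (simp flip: add.assoc)

lemma bit_diff_eq_add: "(x::bit) - y = x + y"
  by (simp add: diff_conv_add_uminus)

section \<open>Ordered simplices\<close>

lemma branching_strict_total_on:
  assumes "branching T prec" and "t \<in> T"
  shows "irreflp_on t prec" "transp_on t prec" "totalp_on t prec"
  using assms unfolding branching_def irreflp_on_def transp_on_def totalp_on_def by metis+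

lemma branching_asym: "branching T prec \<Longrightarrow> prec u w \<Longrightarrow> \<not> prec w u"
  unfolding branching_def by metis

context
  fixes s :: "'v set" and prec :: "'v \<Rightarrow> 'v \<Rightarrow> bool"
  assumes fin: "finite s" and irr: "irreflp_on s prec" and tr: "transp_on s prec"
    and tot: "totalp_on s prec"
begin

private definition rank :: "'v \<Rightarrow> nat" where
  "rank v = card {w\<in>s. prec w v}"

private lemma rank_strict_mono:
  assumes "u \<in> s" "v \<in> s" "prec u v"
  shows "rank u < rank v"
  unfolding rank_def
proof (rule psubset_card_mono)
  show "{w\<in>s. prec w u} \<subset> {w\<in>s. prec w v}"
    using assms irr tr unfolding irreflp_on_def transp_on_def by blast
qed (use fin in simp)

private lemma rank_bij: "bij_betw rank s {..<card s}"
proof -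
  have "inj_on rank s"
    by (rule inj_onI) (metis tot totalp_on_def rank_strict_mono less_irrefl)
  moreover have "rank ` s \<subseteq> {..<card s}"
  proof
    fix r assume "r \<in> rank ` s"
    then obtain v where "v \<in> s" "r = rank v" by blast
    then have "{w\<in>s. prec w v} \<subset> s" using irr unfolding irreflp_on_def by blast
    then show "r \<in> {..<card s}"
      using fin \<open>r = rank v\<close> unfolding rank_def by (simp add: psubset_card_mono)
  qed
  ultimately show ?thesis
    by (simp add: bij_betw_def card_image card_subset_eq)
qed

private lemma vtx_eq_inv_rank: "vtx prec s i = the_inv_into s rank i"
  unfolding vtx_def rank_def[symmetric] the_inv_into_def ..

private lemma vtx_bij: "bij_betw (vtx prec s) {..<card s} s"
  unfolding vtx_eq_inv_rank[abs_def] by (rule bij_betw_the_inv_into[OF rank_bij])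

private lemma rank_vtx: "i < card s \<Longrightarrow> rank (vtx prec s i) = i"
  unfolding vtx_eq_inv_rank using rank_bij
  by (simp add: bij_betw_def f_the_inv_into_f)

lemma vtx_in: "i < card s \<Longrightarrow> vtx prec s i \<in> s"
  using vtx_bij by (simp add: bij_betwE)

lemma vtx_image: "vtx prec s ` {..<card s} = s"
  using vtx_bij by (simp add: bij_betw_def)

lemma vtx_strict_mono:
  assumes "i < j" "j < card s"
  shows "prec (vtx prec s i) (vtx prec s j)"
proof -
  have in_s: "vtx prec s i \<in> s" "vtx prec s j \<in> s" and "vtx prec s i \<noteq> vtx prec s j"
    using assms vtx_in rank_vtx by (metis order.strict_trans less_irrefl)+
  then have "prec (vtx prec s i) (vtx prec s j) \<or> prec (vtx prec s j) (vtx prec s i)"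
    using tot unfolding totalp_on_def by blast
  then show ?thesis
    using rank_strict_mono[OF in_s(2,1)] rank_vtx assms by fastforce
qed

lemma vtx_eqI:
  assumes "v \<in> s" "card {w\<in>s. prec w v} = i"
  shows "vtx prec s i = v"
  using assms rank_bij unfolding vtx_eq_inv_rank rank_def[symmetric]
  by (simp add: bij_betw_def the_inv_into_f_eq)

end

lemma vtx_triangle:
  assumes br: "branching T prec" and "t \<in> T" "{a, b, c} \<subseteq> t"
    and ab: "prec a b" and bc: "prec b c"
  shows "vtx prec {a, b, c} 0 = a" "vtx prec {a, b, c} 1 = b" "vtx prec {a, b, c} 2 = c"
proof -
  note order = branching_strict_total_on[OF br \<open>t \<in> T\<close>]
  have order_abc: "irreflp_on {a, b, c} prec" "transp_on {a, b, c} prec" "totalp_on {a, b, c} prec"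
    using irreflp_on_subset[OF order(1)] transp_on_subset[OF order(2)]
      totalp_on_subset[OF order(3)] assms(3) by blast+
  have ac: "prec a c" using order_abc(2) ab bc unfolding transp_on_def by blast
  have "\<not> prec a a" "\<not> prec b b" "\<not> prec c c"
    using order_abc(1) unfolding irreflp_on_def by blast+
  then have ranks: "{w\<in>{a, b, c}. prec w a} = {}" "{w\<in>{a, b, c}. prec w b} = {a}"
    "{w\<in>{a, b, c}. prec w c} = {a, b}" and a_neq_b: "a \<noteq> b"
    using ab bc ac branching_asym[OF br] by auto
  show "vtx prec {a, b, c} 0 = a" by (rule vtx_eqI[OF _ order_abc]) (unfold ranks, simp_all add: a_neq_b)
  show "vtx prec {a, b, c} 1 = b" by (rule vtx_eqI[OF _ order_abc]) (unfold ranks, simp_all add: a_neq_b)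
  show "vtx prec {a, b, c} 2 = c" by (rule vtx_eqI[OF _ order_abc]) (unfold ranks, simp_all add: a_neq_b)
qed

lemma tetrahedron_ordered_vertices:
  assumes "closed_3mfd_triangulation T" "branching T prec" "t \<in> T"
  obtains v0 v1 v2 v3 where
    "vtx prec t 0 = v0" "vtx prec t 1 = v1" "vtx prec t 2 = v2" "vtx prec t 3 = v3"
    "t = {v0, v1, v2, v3}" "distinct [v0, v1, v2, v3]"
    "prec v0 v1" "prec v0 v2" "prec v0 v3" "prec v1 v2" "prec v1 v3" "prec v2 v3"
proof -
  have card: "card t = 4" and fin: "finite t"
    using assms unfolding closed_3mfd_triangulation_def by (auto intro: card_ge_0_finite)
  note order = branching_strict_total_on[OF assms(2,3)]
  have "{..<card t} = {0, 1, 2, 3 :: nat}" unfolding card by auto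
  then have vertices: "t = {vtx prec t 0, vtx prec t 1, vtx prec t 2, vtx prec t 3}"
    using vtx_image[OF fin order] by auto
  have prec: "prec (vtx prec t i) (vtx prec t j)" if "i < j" "j < 4" for i j
    using vtx_strict_mono[OF fin order that(1)] that(2) card by simp
  have "vtx prec t i \<noteq> vtx prec t j" if "i < j" "j < 4" for i j
    using prec[OF that] vtx_in[OF fin order, of i] order(1) that card
    unfolding irreflp_on_def by auto
  then have "distinct [vtx prec t 0, vtx prec t 1, vtx prec t 2, vtx prec t 3]"
    by simp
  then show thesis
    by (rule that[OF refl refl refl refl vertices]) (simp_all add: prec)
qed

section \<open>Coboundaries on a closed 3-manifold\<close>

lemma finite_ctris:
  assumes "closed_3mfd_triangulation T"
  shows "finite (ctris T)"
proof (rule finite_subset)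
  show "ctris T \<subseteq> Pow (\<Union>T)" unfolding ctris_def by blast
  have "finite T" "\<forall>t\<in>T. finite t"
    using assms unfolding closed_3mfd_triangulation_def by (auto intro: card_ge_0_finite)
  then show "finite (Pow (\<Union>T))" by simp
qed

lemma is_2sphere_edge_in_two_triangles:
  "is_2sphere S \<Longrightarrow> e \<in> sedges S \<Longrightarrow> card {s\<in>S. e \<subseteq> s} = 2"
  unfolding is_2sphere_def by simp

lemma ctris_in_two_tetrahedra:
  assumes cl: "closed_3mfd_triangulation T" and "f \<in> ctris T"
  shows "card {t\<in>T. f \<subseteq> t} = 2"
proof -
  obtain t0 where t0: "t0 \<in> T" "f \<subseteq> t0" and card_f: "card f = 3"
    using assms(2) unfolding ctris_def by blast
  then obtain u where u: "u \<in> f" by fastforce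
  let ?e = "f - {u}"
  have "is_2sphere (vlink3 T u)"
    using cl t0 u unfolding closed_3mfd_triangulation_def by blast
  moreover have "?e \<in> sedges (vlink3 T u)"
  proof -
    have "t0 - {u} \<in> vlink3 T u" unfolding vlink3_def using t0 u by blast
    moreover have "card ?e = 2" using card_f u by (simp add: card_ge_0_finite)
    ultimately show ?thesis unfolding sedges_def using t0 by blast
  qed
  ultimately have two: "card {s\<in>vlink3 T u. ?e \<subseteq> s} = 2"
    by (rule is_2sphere_edge_in_two_triangles)
  have "inj_on (\<lambda>t. t - {u}) {t\<in>T. f \<subseteq> t}"
    using u by (intro inj_onI) (metis (no_types, lifting) insert_Diff mem_Collect_eq subsetD)
  then have "card {t\<in>T. f \<subseteq> t} = card ((\<lambda>t. t - {u}) ` {t\<in>T. f \<subseteq> t})"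
    by (simp add: card_image)
  also have "(\<lambda>t. t - {u}) ` {t\<in>T. f \<subseteq> t} = {s\<in>vlink3 T u. ?e \<subseteq> s}"
    using u unfolding vlink3_def by auto
  finally show ?thesis using two by simp
qed

lemma faces_of_tetrahedron:
  assumes "t \<in> T" "card t = 4"
  shows "{f\<in>ctris T. f \<subseteq> t} = (\<lambda>v. t - {v}) ` t"
proof
  have fin: "finite t" using assms(2) by (simp add: card_ge_0_finite)
  show "{f\<in>ctris T. f \<subseteq> t} \<subseteq> (\<lambda>v. t - {v}) ` t"
  proof
    fix f assume "f \<in> {f\<in>ctris T. f \<subseteq> t}"
    then have "f \<subseteq> t" "card f = 3" unfolding ctris_def by auto
    then have "card (t - f) = 1" using assms(2) fin by (simp add: card_Diff_subset finite_subset)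
    then obtain v where "t - f = {v}" using card_1_singletonE by blast
    then show "f \<in> (\<lambda>v. t - {v}) ` t" using \<open>f \<subseteq> t\<close> by blast
  qed
  show "(\<lambda>v. t - {v}) ` t \<subseteq> {f\<in>ctris T. f \<subseteq> t}"
  proof
    fix f assume "f \<in> (\<lambda>v. t - {v}) ` t"
    then obtain v where "v \<in> t" "f = t - {v}" by blast
    moreover have "card (t - {v}) = 3" using \<open>v \<in> t\<close> assms(2) fin by simp
    ultimately show "f \<in> {f\<in>ctris T. f \<subseteq> t}" unfolding ctris_def using assms(1) by blast
  qed
qed

(* (\<delta>G)(t) for a 2-cochain G given by its values on increasingly ordered vertex triples;
   mod 2 no orientation signs are needed. *)
definition coboundary2 ::
    "('v \<Rightarrow> 'v \<Rightarrow> bool) \<Rightarrow> ('v \<Rightarrow> 'v \<Rightarrow> 'v \<Rightarrow> bit) \<Rightarrow> 'v set \<Rightarrow> bit" where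
  "coboundary2 prec G t =
     G (vtx prec t 1) (vtx prec t 2) (vtx prec t 3) + G (vtx prec t 0) (vtx prec t 2) (vtx prec t 3)
   + G (vtx prec t 0) (vtx prec t 1) (vtx prec t 3) + G (vtx prec t 0) (vtx prec t 1) (vtx prec t 2)"

lemma coboundary2_eq_sum_faces:
  assumes cl: "closed_3mfd_triangulation T" and br: "branching T prec" and "t \<in> T"
  shows "coboundary2 prec G t
    = (\<Sum>f\<in>{f\<in>ctris T. f \<subseteq> t}. G (vtx prec f 0) (vtx prec f 1) (vtx prec f 2))"
proof -
  obtain v0 v1 v2 v3 where
    vtx: "vtx prec t 0 = v0" "vtx prec t 1 = v1" "vtx prec t 2 = v2" "vtx prec t 3 = v3"
    and t: "t = {v0, v1, v2, v3}" and distinct: "distinct [v0, v1, v2, v3]"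
    and prec: "prec v0 v1" "prec v1 v2" "prec v2 v3" "prec v0 v2" "prec v1 v3"
    using tetrahedron_ordered_vertices[OF cl br \<open>t \<in> T\<close>] by metis
  define F where "F f = G (vtx prec f 0) (vtx prec f 1) (vtx prec f 2)" for f
  have "card t = 4" using distinct t by simp
  then have faces: "{f\<in>ctris T. f \<subseteq> t} = (\<lambda>v. t - {v}) ` t"
    by (rule faces_of_tetrahedron[OF \<open>t \<in> T\<close>])
  have "inj_on (\<lambda>v. t - {v}) t" by (auto simp: inj_on_def)
  then have "(\<Sum>f\<in>{f\<in>ctris T. f \<subseteq> t}. F f) = (\<Sum>v\<in>t. F (t - {v}))"
    by (simp add: faces sum.reindex)
  also have "\<dots> = F (t - {v0}) + F (t - {v1}) + F (t - {v2}) + F (t - {v3})"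
    using sum.distinct_set_conv_list[OF distinct, of "\<lambda>v. F (t - {v})"]
    by (simp add: add.assoc flip: t)
  also have "\<dots> = F {v1, v2, v3} + F {v0, v2, v3} + F {v0, v1, v3} + F {v0, v1, v2}"
  proof -
    have "t - {v0} = {v1, v2, v3}" "t - {v1} = {v0, v2, v3}"
      "t - {v2} = {v0, v1, v3}" "t - {v3} = {v0, v1, v2}"
      using distinct unfolding t by auto
    then show ?thesis by simp
  qed
  also have "\<dots> = coboundary2 prec G t"
  proof -
    note tri = vtx_triangle[OF br \<open>t \<in> T\<close>]
    have "{v1, v2, v3} \<subseteq> t" "{v0, v2, v3} \<subseteq> t" "{v0, v1, v3} \<subseteq> t" "{v0, v1, v2} \<subseteq> t"
      using t by auto
    from tri[OF this(1) prec(2,3)] tri[OF this(2) prec(4,3)] tri[OF this(3) prec(1,5)]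
      tri[OF this(4) prec(1,2)]
    show ?thesis unfolding F_def coboundary2_def vtx by simp
  qed
  finally show ?thesis unfolding F_def ..
qed

lemma sum_coboundary2_closed:
  assumes cl: "closed_3mfd_triangulation T" and br: "branching T prec"
  shows "(\<Sum>t\<in>T. coboundary2 prec G t) = 0"
proof -
  define F where "F f = G (vtx prec f 0) (vtx prec f 1) (vtx prec f 2)" for f
  have "(\<Sum>t\<in>T. coboundary2 prec G t) = (\<Sum>t\<in>T. \<Sum>f\<in>{f\<in>ctris T. f \<subseteq> t}. F f)"
    unfolding F_def by (rule sum.cong[OF refl coboundary2_eq_sum_faces[OF cl br]])
  also have "\<dots> = (\<Sum>f\<in>ctris T. \<Sum>t\<in>{t\<in>T. f \<subseteq> t}. F f)"
    using cl finite_ctris[OF cl] unfolding closed_3mfd_triangulation_def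
    by (intro sum.swap_restrict) auto
  also have "\<dots> = (\<Sum>f\<in>ctris T. 2 * F f)"
    by (simp add: ctris_in_two_tetrahedra[OF cl])
  finally show ?thesis by simp
qed

section \<open>Cohomology invariance of the triple cup product\<close>

definition cup3_on ::
    "('v \<Rightarrow> 'v \<Rightarrow> bool) \<Rightarrow> 'v cochain1 \<Rightarrow> 'v cochain1 \<Rightarrow> 'v cochain1 \<Rightarrow> 'v set \<Rightarrow> bit" where
  "cup3_on prec x y z t =
     x {vtx prec t 0, vtx prec t 1} * y {vtx prec t 1, vtx prec t 2} * z {vtx prec t 2, vtx prec t 3}"

lemma cup3_int_eq_sum_cup3_on: "cup3_int T prec x y z = (\<Sum>t\<in>T. cup3_on prec x y z t)"
  unfolding cup3_int_def cup3_on_def ..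

lemma cup3_int_eq_mod_coboundary:
  assumes "closed_3mfd_triangulation T" "branching T prec"
    and "\<And>t. t \<in> T \<Longrightarrow> cup3_on prec x y z t = cup3_on prec x' y' z' t + coboundary2 prec G t"
  shows "cup3_int T prec x y z = cup3_int T prec x' y' z'"
  using sum_coboundary2_closed[OF assms(1,2), of G]
  by (simp add: cup3_int_eq_sum_cup3_on assms(3) sum.distrib)

lemma bdry_edges_triangle:
  assumes "distinct [x, y, z]"
  shows "bdry_edges {x, y, z} = {{x, y}, {y, z}, {x, z}}"
proof
  show "bdry_edges {x, y, z} \<subseteq> {{x, y}, {y, z}, {x, z}}"
  proof
    fix e assume "e \<in> bdry_edges {x, y, z}"
    then have "e \<subseteq> {x, y, z}" "card e = 2" unfolding bdry_edges_def by auto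
    then show "e \<in> {{x, y}, {y, z}, {x, z}}" by (auto simp: card_2_iff insert_commute)
  qed
  show "{{x, y}, {y, z}, {x, z}} \<subseteq> bdry_edges {x, y, z}"
    unfolding bdry_edges_def using assms by auto
qed

lemma cocycle1_triangle:
  assumes "cocycle1 T c" "{x, y, z} \<in> ctris T" "distinct [x, y, z]"
  shows "c {x, z} = c {x, y} + c {y, z}"
proof -
  have "{x, y} \<noteq> {y, z}" "{x, y} \<noteq> {x, z}" "{y, z} \<noteq> {x, z}"
    using assms(3) by (auto simp: doubleton_eq_iff)
  then have "(\<Sum>e\<in>bdry_edges {x, y, z}. c e) = c {x, y} + c {y, z} + c {x, z}"
    by (simp add: bdry_edges_triangle[OF assms(3)] add.assoc)
  moreover have "(\<Sum>e\<in>bdry_edges {x, y, z}. c e) = 0"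
    using assms(1,2) unfolding cocycle1_def by blast
  ultimately show ?thesis by (metis bit_add_self_left add_0_right)
qed

lemma cohomologous_edgeE:
  assumes "cohomologous T c d"
  obtains g where "\<And>p q. {p, q} \<in> cedges T \<Longrightarrow> p \<noteq> q \<Longrightarrow> c {p, q} = d {p, q} + g p + g q"
proof -
  obtain g where g: "\<forall>e\<in>cedges T. c e - d e = (\<Sum>v\<in>e. g v)"
    using assms unfolding cohomologous_def by blast
  have "c {p, q} = d {p, q} + g p + g q" if "{p, q} \<in> cedges T" "p \<noteq> q" for p q
  proof -
    have "d {p, q} + c {p, q} = g p + g q"
      using g that by (simp add: bit_diff_eq_add add.commute)
    then show ?thesis by (metis add.assoc bit_add_self_left)
  qed
  then show thesis by (rule that)
qed

lemma tetrahedron_cochain_rules: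
  assumes cl: "closed_3mfd_triangulation T" and br: "branching T prec" and "t \<in> T"
  obtains v0 v1 v2 v3 where
    "vtx prec t 0 = v0" "vtx prec t 1 = v1" "vtx prec t 2 = v2" "vtx prec t 3 = v3"
    "distinct [v0, v1, v2, v3]"
    "{v0, v1} \<in> cedges T" "{v1, v2} \<in> cedges T" "{v2, v3} \<in> cedges T"
    "\<And>c. cocycle1 T c \<Longrightarrow> c {v0, v2} = c {v0, v1} + c {v1, v2}"
    "\<And>c. cocycle1 T c \<Longrightarrow> c {v1, v3} = c {v1, v2} + c {v2, v3}"
proof -
  obtain v0 v1 v2 v3 where
    vtx: "vtx prec t 0 = v0" "vtx prec t 1 = v1" "vtx prec t 2 = v2" "vtx prec t 3 = v3"
    and t: "t = {v0, v1, v2, v3}" and distinct: "distinct [v0, v1, v2, v3]"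
    using tetrahedron_ordered_vertices[OF cl br \<open>t \<in> T\<close>] by metis
  have edges: "{v0, v1} \<in> cedges T" "{v1, v2} \<in> cedges T" "{v2, v3} \<in> cedges T"
    unfolding cedges_def using \<open>t \<in> T\<close> distinct t by (auto intro!: bexI[of _ t])
  have triangles: "{v0, v1, v2} \<in> ctris T" "{v1, v2, v3} \<in> ctris T"
    unfolding ctris_def using \<open>t \<in> T\<close> distinct t by (auto intro!: bexI[of _ t])
  have "c {v0, v2} = c {v0, v1} + c {v1, v2}" "c {v1, v3} = c {v1, v2} + c {v2, v3}"
    if "cocycle1 T c" for c
    using cocycle1_triangle[OF that triangles(1)] cocycle1_triangle[OF that triangles(2)] distinct
    by simp_all
  then show thesis by (rule that[OF vtx distinct edges])
qed

(* Leibniz rule: for cocycles y and z, \<delta>g \<union> y \<union> z = \<delta>(g \<union> y \<union> z); the middle and right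
   slots are analogous. *)
lemma cup3_int_cohomologous_left:
  assumes cl: "closed_3mfd_triangulation T" and br: "branching T prec"
    and "cohomologous T x x'" "cocycle1 T y" "cocycle1 T z"
  shows "cup3_int T prec x y z = cup3_int T prec x' y z"
proof -
  obtain g where g: "\<And>p q. {p, q} \<in> cedges T \<Longrightarrow> p \<noteq> q \<Longrightarrow> x {p, q} = x' {p, q} + g p + g q"
    using cohomologous_edgeE[OF assms(3)] by blast
  show ?thesis
  proof (rule cup3_int_eq_mod_coboundary[OF cl br, where G = "\<lambda>p q r. g p * y {p, q} * z {q, r}"])
    fix t assume "t \<in> T"
    then obtain v0 v1 v2 v3 where
      vtx: "vtx prec t 0 = v0" "vtx prec t 1 = v1" "vtx prec t 2 = v2" "vtx prec t 3 = v3"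
      and "distinct [v0, v1, v2, v3]"
      and "{v0, v1} \<in> cedges T" "{v1, v2} \<in> cedges T" "{v2, v3} \<in> cedges T"
      and "\<And>c. cocycle1 T c \<Longrightarrow> c {v0, v2} = c {v0, v1} + c {v1, v2}"
      and "\<And>c. cocycle1 T c \<Longrightarrow> c {v1, v3} = c {v1, v2} + c {v2, v3}"
      using tetrahedron_cochain_rules[OF cl br] by blast
    then have "x {v0, v1} = x' {v0, v1} + g v0 + g v1"
      "y {v0, v2} = y {v0, v1} + y {v1, v2}" "z {v1, v3} = z {v1, v2} + z {v2, v3}"
      using g assms(4,5) by auto
    then show "cup3_on prec x y z t = cup3_on prec x' y z t
        + coboundary2 prec (\<lambda>p q r. g p * y {p, q} * z {q, r}) t"
      unfolding cup3_on_def coboundary2_def vtx by (simp add: algebra_simps)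
  qed
qed

lemma cup3_int_cohomologous_middle:
  assumes cl: "closed_3mfd_triangulation T" and br: "branching T prec"
    and "cohomologous T y y'" "cocycle1 T x" "cocycle1 T z"
  shows "cup3_int T prec x y z = cup3_int T prec x y' z"
proof -
  obtain g where g: "\<And>p q. {p, q} \<in> cedges T \<Longrightarrow> p \<noteq> q \<Longrightarrow> y {p, q} = y' {p, q} + g p + g q"
    using cohomologous_edgeE[OF assms(3)] by blast
  show ?thesis
  proof (rule cup3_int_eq_mod_coboundary[OF cl br, where G = "\<lambda>p q r. x {p, q} * g q * z {q, r}"])
    fix t assume "t \<in> T"
    then obtain v0 v1 v2 v3 where
      vtx: "vtx prec t 0 = v0" "vtx prec t 1 = v1" "vtx prec t 2 = v2" "vtx prec t 3 = v3"
      and "distinct [v0, v1, v2, v3]"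
      and "{v0, v1} \<in> cedges T" "{v1, v2} \<in> cedges T" "{v2, v3} \<in> cedges T"
      and "\<And>c. cocycle1 T c \<Longrightarrow> c {v0, v2} = c {v0, v1} + c {v1, v2}"
      and "\<And>c. cocycle1 T c \<Longrightarrow> c {v1, v3} = c {v1, v2} + c {v2, v3}"
      using tetrahedron_cochain_rules[OF cl br] by blast
    then have "y {v1, v2} = y' {v1, v2} + g v1 + g v2"
      "x {v0, v2} = x {v0, v1} + x {v1, v2}" "z {v1, v3} = z {v1, v2} + z {v2, v3}"
      using g assms(4,5) by auto
    then show "cup3_on prec x y z t = cup3_on prec x y' z t
        + coboundary2 prec (\<lambda>p q r. x {p, q} * g q * z {q, r}) t"
      unfolding cup3_on_def coboundary2_def vtx by (simp add: algebra_simps)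
  qed
qed

lemma cup3_int_cohomologous_right:
  assumes cl: "closed_3mfd_triangulation T" and br: "branching T prec"
    and "cohomologous T z z'" "cocycle1 T x" "cocycle1 T y"
  shows "cup3_int T prec x y z = cup3_int T prec x y z'"
proof -
  obtain g where g: "\<And>p q. {p, q} \<in> cedges T \<Longrightarrow> p \<noteq> q \<Longrightarrow> z {p, q} = z' {p, q} + g p + g q"
    using cohomologous_edgeE[OF assms(3)] by blast
  show ?thesis
  proof (rule cup3_int_eq_mod_coboundary[OF cl br, where G = "\<lambda>p q r. x {p, q} * y {q, r} * g r"])
    fix t assume "t \<in> T"
    then obtain v0 v1 v2 v3 where
      vtx: "vtx prec t 0 = v0" "vtx prec t 1 = v1" "vtx prec t 2 = v2" "vtx prec t 3 = v3"
      and "distinct [v0, v1, v2, v3]"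
      and "{v0, v1} \<in> cedges T" "{v1, v2} \<in> cedges T" "{v2, v3} \<in> cedges T"
      and "\<And>c. cocycle1 T c \<Longrightarrow> c {v0, v2} = c {v0, v1} + c {v1, v2}"
      and "\<And>c. cocycle1 T c \<Longrightarrow> c {v1, v3} = c {v1, v2} + c {v2, v3}"
      using tetrahedron_cochain_rules[OF cl br] by blast
    then have "z {v2, v3} = z' {v2, v3} + g v2 + g v3"
      "x {v0, v2} = x {v0, v1} + x {v1, v2}" "y {v1, v3} = y {v1, v2} + y {v2, v3}"
      using g assms(4,5) by auto
    then show "cup3_on prec x y z t = cup3_on prec x y z' t
        + coboundary2 prec (\<lambda>p q r. x {p, q} * y {q, r} * g r) t"
      unfolding cup3_on_def coboundary2_def vtx by (simp add: algebra_simps)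
  qed
qed

lemma lincomb_cocycle1:
  assumes "\<forall>\<alpha>\<in>B. cocycle1 T \<alpha>"
  shows "cocycle1 T (lincomb B n)"
  unfolding cocycle1_def is_cochain1_def
proof safe
  fix e assume "e \<notin> cedges T"
  then have "\<forall>\<alpha>\<in>B. \<alpha> e = 0"
    using assms unfolding cocycle1_def is_cochain1_def by blast
  then show "lincomb B n e = 0" unfolding lincomb_def by (simp add: sum.neutral)
next
  fix f assume "f \<in> ctris T"
  have "(\<Sum>e\<in>bdry_edges f. lincomb B n e) = (\<Sum>\<alpha>\<in>B. n \<alpha> * (\<Sum>e\<in>bdry_edges f. \<alpha> e))"
    unfolding lincomb_def sum_distrib_left by (rule sum.swap)
  also have "\<dots> = 0" using assms \<open>f \<in> ctris T\<close> unfolding cocycle1_def by simp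
  finally show "(\<Sum>e\<in>bdry_edges f. lincomb B n e) = 0" .
qed

lemma cup3_on_lincomb:
  "cup3_on prec (lincomb B n) (lincomb B m) (lincomb B l) t
    = (\<Sum>\<alpha>\<in>B. \<Sum>\<beta>\<in>B. \<Sum>\<gamma>\<in>B. n \<alpha> * m \<beta> * l \<gamma> * cup3_on prec \<alpha> \<beta> \<gamma> t)"
proof -
  have product: "(\<Sum>\<alpha>\<in>B. X \<alpha>) * (\<Sum>\<beta>\<in>B. Y \<beta>) * (\<Sum>\<gamma>\<in>B. Z \<gamma>)
      = (\<Sum>\<alpha>\<in>B. \<Sum>\<beta>\<in>B. \<Sum>\<gamma>\<in>B. X \<alpha> * Y \<beta> * Z \<gamma>)" for X Y Z :: "_ \<Rightarrow> bit"
    by (simp only: mult.assoc sum_distrib_right) (simp only: sum_distrib_left)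
  show ?thesis
    unfolding cup3_on_def lincomb_def product by (simp only: mult_ac)
qed

lemma cup3_int_lincomb:
  "cup3_int T prec (lincomb B n) (lincomb B m) (lincomb B l)
    = (\<Sum>\<alpha>\<in>B. \<Sum>\<beta>\<in>B. \<Sum>\<gamma>\<in>B. n \<alpha> * m \<beta> * l \<gamma> * cup3_int T prec \<alpha> \<beta> \<gamma>)"
proof -
  have "cup3_int T prec (lincomb B n) (lincomb B m) (lincomb B l)
      = (\<Sum>t\<in>T. \<Sum>\<alpha>\<in>B. \<Sum>\<beta>\<in>B. \<Sum>\<gamma>\<in>B. n \<alpha> * m \<beta> * l \<gamma> * cup3_on prec \<alpha> \<beta> \<gamma> t)"
    unfolding cup3_int_eq_sum_cup3_on cup3_on_lincomb ..
  also have "\<dots> = (\<Sum>\<alpha>\<in>B. \<Sum>\<beta>\<in>B. \<Sum>\<gamma>\<in>B. \<Sum>t\<in>T. n \<alpha> * m \<beta> * l \<gamma> * cup3_on prec \<alpha> \<beta> \<gamma> t)"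
    by (subst sum.swap, subst (2) sum.swap, subst (3) sum.swap) (rule refl)
  also have "\<dots> = (\<Sum>\<alpha>\<in>B. \<Sum>\<beta>\<in>B. \<Sum>\<gamma>\<in>B. n \<alpha> * m \<beta> * l \<gamma> * cup3_int T prec \<alpha> \<beta> \<gamma>)"
    unfolding cup3_int_eq_sum_cup3_on sum_distrib_left ..
  finally show ?thesis .
qed

lemma coeff_cohomologous:
  assumes "coh_basis T B" "cocycle1 T c"
  shows "cohomologous T c (lincomb B (coeff T B c))"
proof -
  let ?P = "\<lambda>n. (\<forall>x. x \<notin> B \<longrightarrow> n x = 0) \<and> cohomologous T c (lincomb B n)"
  have "\<exists>!n. ?P n" using assms unfolding coh_basis_def by blast
  then have "?P (THE n. ?P n)" by (rule theI')
  moreover have "coeff T B c = (THE n. ?P n)" by (rule ext) (simp add: coeff_def)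
  ultimately show ?thesis by simp
qed

lemma cup3_int_basis_expansion:
  assumes cl: "closed_3mfd_triangulation T" and br: "branching T prec" and B: "coh_basis T B"
    and x: "cocycle1 T x" and y: "cocycle1 T y" and z: "cocycle1 T z"
  shows "cup3_int T prec x y z = (\<Sum>\<alpha>\<in>B. \<Sum>\<beta>\<in>B. \<Sum>\<gamma>\<in>B.
           coeff T B x \<alpha> * coeff T B y \<beta> * coeff T B z \<gamma> * cup3_int T prec \<alpha> \<beta> \<gamma>)"
proof -
  let ?x = "lincomb B (coeff T B x)" and ?y = "lincomb B (coeff T B y)"
    and ?z = "lincomb B (coeff T B z)"
  have "\<forall>\<alpha>\<in>B. cocycle1 T \<alpha>" using B unfolding coh_basis_def by blast
  note lincomb = lincomb_cocycle1[OF this]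
  have "cup3_int T prec x y z = cup3_int T prec ?x y z"
    using cup3_int_cohomologous_left[OF cl br coeff_cohomologous[OF B x] y z] .
  also have "\<dots> = cup3_int T prec ?x ?y z"
    using cup3_int_cohomologous_middle[OF cl br coeff_cohomologous[OF B y] lincomb z] .
  also have "\<dots> = cup3_int T prec ?x ?y ?z"
    using cup3_int_cohomologous_right[OF cl br coeff_cohomologous[OF B z] lincomb lincomb] .
  finally show ?thesis unfolding cup3_int_lincomb .
qed

section \<open>The circuit on the code space\<close>

lemma sgnb_add: "sgnb (x + y) = sgnb x * sgnb y"
  by (cases x; cases y) (simp_all add: sgnb_def)

lemma sgnb_sum: "sgnb (\<Sum>x\<in>A. f x) = (\<Prod>x\<in>A. sgnb (f x))"
proof (cases "finite A")
  case True
  then show ?thesis by (induction A rule: finite_induct) (simp_all add: sgnb_add sgnb_def[of 0])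
qed (simp add: sgnb_def)

lemma sgnb_power_bit_nat: "sgnb x ^ bit_nat y = sgnb (x * y)"
  by (cases x; cases y) (simp_all add: sgnb_def bit_nat_def)

lemma sgnb_eq_1_iff: "sgnb x = 1 \<longleftrightarrow> x = 0"
  by (cases x) (simp_all add: sgnb_def)

lemma U_circ_phase: "U_circ T prec \<psi> = (\<lambda>a. sgnb (cup3_int T prec (a 1) (a 2) (a 3)) * \<psi> a)"
  unfolding U_circ_def cup3_int_def sgnb_sum ..

lemma code_space_cocycle1:
  assumes "\<psi> \<in> code_space T" "\<psi> a \<noteq> 0" "i \<in> {1, 2, 3}"
  shows "cocycle1 T (a i)"
  unfolding cocycle1_def
proof
  show "is_cochain1 T (a i)"
    using assms unfolding code_space_def hilb_def valid_cfg_def is_cochain1_def by blast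
  show "\<forall>f\<in>ctris T. (\<Sum>e\<in>bdry_edges f. a i e) = 0"
  proof
    fix f assume "f \<in> ctris T"
    then have "Zstab i f \<psi> = \<psi>" using assms(1,3) unfolding code_space_def by blast
    then have "Zstab i f \<psi> a = \<psi> a" by simp
    then show "(\<Sum>e\<in>bdry_edges f. a i e) = 0"
      using assms(2) unfolding Zstab_def by (simp add: sgnb_eq_1_iff)
  qed
qed

(* X^(i)_v flips the qubits on all edges at v, i.e. adds the coboundary of the indicator of v. *)
definition flip_star :: "'v set set \<Rightarrow> 'v \<Rightarrow> 'v cochain1 \<Rightarrow> 'v cochain1" where
  "flip_star T v c = (\<lambda>e. if e \<in> cedges T \<and> v \<in> e then c e + 1 else c e)"

lemma Xstab_flip_star: "Xstab T i v \<psi> = (\<lambda>a. \<psi> (a(i := flip_star T v (a i))))"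
  unfolding Xstab_def flip_star_def ..

lemma cohomologous_flip_star: "cohomologous T c (flip_star T v c)"
  unfolding cohomologous_def
proof (intro exI ballI)
  fix e assume "e \<in> cedges T"
  then have "finite e" unfolding cedges_def by (auto intro: card_ge_0_finite)
  then show "c e - flip_star T v c e = (\<Sum>w\<in>e. if w = v then 1 else 0)"
    using \<open>e \<in> cedges T\<close> by (simp add: flip_star_def bit_diff_eq_add)
qed

lemma cup3_int_flip_star:
  fixes a :: "'v cfg" and v :: 'v
  assumes cl: "closed_3mfd_triangulation T" and br: "branching T prec"
    and c: "cocycle1 T (a 1)" "cocycle1 T (a 2)" "cocycle1 T (a 3)" and "i \<in> {1, 2, 3}"
  defines "a' \<equiv> a(i := flip_star T v (a i))"
  shows "cup3_int T prec (a' 1) (a' 2) (a' 3) = cup3_int T prec (a 1) (a 2) (a 3)"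
proof -
  note flip = cohomologous_flip_star[of T _ v]
  consider "i = 1" | "i = 2" | "i = 3" using \<open>i \<in> {1, 2, 3}\<close> by blast
  then show ?thesis
  proof cases
    case 1
    then show ?thesis using cup3_int_cohomologous_left[OF cl br flip c(2,3)] by (simp add: a'_def)
  next
    case 2
    then show ?thesis using cup3_int_cohomologous_middle[OF cl br flip c(1,3)] by (simp add: a'_def)
  next
    case 3
    then show ?thesis using cup3_int_cohomologous_right[OF cl br flip c(1,2)] by (simp add: a'_def)
  qed
qed

lemma diagonal_preserves_code_space:
  assumes \<psi>: "\<psi> \<in> code_space T"
    and invariant: "\<And>a i v. cocycle1 T (a 1) \<Longrightarrow> cocycle1 T (a 2) \<Longrightarrow> cocycle1 T (a 3)
      \<Longrightarrow> i \<in> {1, 2, 3} \<Longrightarrow> \<phi> (a(i := flip_star T v (a i))) = \<phi> a"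
  shows "(\<lambda>a. \<phi> a * \<psi> a) \<in> code_space T"
  unfolding code_space_def
proof (intro CollectI conjI ballI)
  show "(\<lambda>a. \<phi> a * \<psi> a) \<in> hilb T"
    using \<psi> unfolding code_space_def hilb_def by simp
next
  fix i :: nat and f assume "i \<in> {1, 2, 3}" "f \<in> ctris T"
  then have Z: "Zstab i f \<psi> = \<psi>" using \<psi> unfolding code_space_def by blast
  show "Zstab i f (\<lambda>a. \<phi> a * \<psi> a) = (\<lambda>a. \<phi> a * \<psi> a)"
  proof
    fix a
    have "Zstab i f (\<lambda>a. \<phi> a * \<psi> a) a = \<phi> a * (sgnb (\<Sum>e\<in>bdry_edges f. a i e) * \<psi> a)"
      unfolding Zstab_def by (rule mult.left_commute)
    also have "\<dots> = \<phi> a * \<psi> a" using fun_cong[OF Z, of a] unfolding Zstab_def by simp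
    finally show "Zstab i f (\<lambda>a. \<phi> a * \<psi> a) a = \<phi> a * \<psi> a" .
  qed
next
  fix i :: nat and v assume i: "i \<in> {1, 2, 3}" and "v \<in> \<Union>T"
  then have "Xstab T i v \<psi> = \<psi>" using \<psi> unfolding code_space_def by blast
  then have X: "\<psi> (a(i := flip_star T v (a i))) = \<psi> a" for a
    using fun_cong[of "Xstab T i v \<psi>" \<psi> a] unfolding Xstab_flip_star by simp
  show "Xstab T i v (\<lambda>a. \<phi> a * \<psi> a) = (\<lambda>a. \<phi> a * \<psi> a)"
  proof
    fix a
    show "Xstab T i v (\<lambda>a. \<phi> a * \<psi> a) a = \<phi> a * \<psi> a"
    proof (cases "\<psi> a = 0")
      case False
      then have "\<phi> (a(i := flip_star T v (a i))) = \<phi> a"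
        using invariant code_space_cocycle1[OF \<psi> False] i by simp
      then show ?thesis unfolding Xstab_flip_star X by simp
    qed (simp add: Xstab_flip_star X)
  qed
qed

lemma U_circ_preserves_code_space:
  assumes "closed_3mfd_triangulation T" "branching T prec" "\<psi> \<in> code_space T"
  shows "U_circ T prec \<psi> \<in> code_space T"
  unfolding U_circ_phase using assms(3)
  by (rule diagonal_preserves_code_space) (subst cup3_int_flip_star[OF assms(1,2)], simp_all)

lemma U_circ_eq_logical_product:
  assumes cl: "closed_3mfd_triangulation T" and br: "branching T prec" and B: "coh_basis T B"
    and \<psi>: "\<psi> \<in> code_space T"
  shows "U_circ T prec \<psi> = logical_product T prec B \<psi>"
proof
  fix a
  show "U_circ T prec \<psi> a = logical_product T prec B \<psi> a"
  proof (cases "\<psi> a = 0")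
    case False
    have "cocycle1 T (a i)" if "i \<in> {1, 2, 3}" for i
      using code_space_cocycle1[OF \<psi> False that] .
    then have "cup3_int T prec (a 1) (a 2) (a 3) = (\<Sum>\<alpha>\<in>B. \<Sum>\<beta>\<in>B. \<Sum>\<gamma>\<in>B.
        coeff T B (a 1) \<alpha> * coeff T B (a 2) \<beta> * coeff T B (a 3) \<gamma> * cup3_int T prec \<alpha> \<beta> \<gamma>)"
      by (intro cup3_int_basis_expansion[OF cl br B]) simp_all
    then show ?thesis
      unfolding U_circ_phase logical_product_def logical_CCZ_phase_def sgnb_power_bit_nat
      by (simp add: sgnb_sum)
  qed (simp add: U_circ_phase logical_product_def)
qed

theorem mainTheorem2:
  fixes T :: "'v set set" and prec :: "'v \<Rightarrow> 'v \<Rightarrow> bool" and B :: "'v cochain1 set"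
  assumes "closed_3mfd_triangulation T"
    and "branching T prec"
    and "coh_basis T B"
  shows "(\<forall>\<psi>\<in>code_space T. U_circ T prec \<psi> \<in> code_space T)
       \<and> (\<forall>\<psi>\<in>code_space T. U_circ T prec \<psi> = logical_product T prec B \<psi>)"
  using U_circ_preserves_code_space[OF assms(1,2)] U_circ_eq_logical_product[OF assms]
  by blast

end
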